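(* Let $G_{\mathrm{AndI}}$ be the $q$-grammar with master variables $\{x,y\}$, rule $x_j\mapsto q^jx_jy_{j+1}$, $y_j\mapsto q^jx_j$, and order AIO, with $q$-derivative $D$. Let $\phi^{nc}$ be the $\mathbb{K}[q]$-linear multiplicative map sending $x_j\mapsto x$ and $y_j\mapsto y$ for all $j$, where $x,y$ are non-commuting indeterminates (so $\phi^{nc}(D^n(x_0))$ lies in the free algebra $\mathbb{K}[q]\langle x,y\rangle$). Then for $n\ge1$ the number of distinct monomials with nonzero coefficient in $\phi^{nc}(D^n(x_0))$ equals the Fibonacci number $F_{n+1}$, where $F_1=F_2=1$ and $F_{m+1}=F_m+F_{m-1}$.
   Context: $\mathbb{K}$ is a commutative ring with unity and characteristic zero, $q$ an indeterminate. For a set $S$ of master variables, $\mathbb{S}=\{s_i:s\in S,\ i\ge0\}$ is a set of non-commuting variables, $F(\mathbb{S})$ the free group on $\mathbb{S}$, $\mathbb{E}=\mathbb{K}[q][F(\mathbb{S})]$ its group algebra. A rule $R$ assigns to each $s_i$ an element of $\mathbb{E}$. The up-arrow $\uparrow$ is the linear map replacing each letter $s_i^{\pm1}$ by $s_{i+1}^{\pm1}$. AIO stably reorders the letters of a word according to the position of their underlying variable in $x_0,y_0,x_1,y_1,\dots$. The $q$-derivative of a $q$-grammar $(S,R,\rho)$ is the $\mathbb{K}[q]$-linear map with $D(w_1\cdots w_n)=\sum_{j=1}^n\rho\big(w_1\cdots w_{j-1}R(w_j)\uparrow(w_{j+1}\cdots w_n)\big)$ for letters $w_j$, $D^0=\mathrm{id}$,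 $D^k=D\circ D^{k-1}$. *)

theory Defs
  imports "HOL-Library.Poly_Mapping" "HOL-Computational_Algebra.Polynomial" "HOL-Number_Theory.Fib"
begin

text \<open>Master variables x, y.  A letter s_i is a pair (master, i).
  Elements of E are finitely supported K[q]-combinations of words (positive words).\<close>

datatype master = MX | MY

type_synonym letter = "master \<times> nat"

type_synonym 'a elt = "letter list \<Rightarrow>\<^sub>0 'a poly"

definition lin_ext :: "('b \<Rightarrow> ('c \<Rightarrow>\<^sub>0 'r::comm_semiring_1)) \<Rightarrow> ('b \<Rightarrow>\<^sub>0 'r) \<Rightarrow> ('c \<Rightarrow>\<^sub>0 'r)" where
  "lin_ext g f = (\<Sum>w\<in>Poly_Mapping.keys f. Poly_Mapping.map (\<lambda>c. Poly_Mapping.lookup f w * c) (g w))"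

fun up_letter :: "letter \<Rightarrow> letter" where
  "up_letter (m, i) = (m, Suc i)"

text \<open>Position of the underlying variable in x_0, y_0, x_1, y_1, ...\<close>
fun aio_key :: "letter \<Rightarrow> nat" where
  "aio_key (MX, i) = 2 * i"
| "aio_key (MY, i) = 2 * i + 1"

text \<open>AIO: stable reordering (sort_key is stable).\<close>
definition AIO :: "letter list \<Rightarrow> letter list" where
  "AIO w = sort_key aio_key w"

fun R_AndI :: "letter \<Rightarrow> 'a::comm_ring_1 elt" where
  "R_AndI (MX, j) = Poly_Mapping.single [(MX, j), (MY, Suc j)] ([:0, 1:] ^ j)"
| "R_AndI (MY, j) = Poly_Mapping.single [(MX, j)] ([:0, 1:] ^ j)"

definition D_word :: "letter list \<Rightarrow> 'a::comm_ring_1 elt" where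
  "D_word w = (\<Sum>j<length w.
      lin_ext (\<lambda>u. Poly_Mapping.single (AIO (take j w @ u @ map up_letter (drop (Suc j) w))) 1)
              (R_AndI (w ! j)))"

definition D_AndI :: "'a::comm_ring_1 elt \<Rightarrow> 'a elt" where
  "D_AndI f = lin_ext D_word f"

text \<open>phi^nc: x_j \<mapsto> x, y_j \<mapsto> y, into the free algebra K[q]<x,y>
  (monomials = words over {x,y}).\<close>
definition phi_nc :: "'a::comm_ring_1 elt \<Rightarrow> (master list \<Rightarrow>\<^sub>0 'a poly)" where
  "phi_nc f = lin_ext (\<lambda>w. Poly_Mapping.single (map fst w) 1) f"

end

(*
  All coefficients that occur are nonzero polynomials with natural-number coefficients,
  so no cancellation ever happens: the support of D^n(x_0) is the set of words reachable
  from x_0 by n single-letter rewrites, and phi^nc maps supports onto supports.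

  Weighting x by 2 and y by 1, every rewrite raises the weight of a word by one, and x_0
  stays in front under AIO; so the support of phi^nc(D^n(x_0)) consists of words x v with
  v of weight n.  Conversely every such word, with its i-th letter given index i (a fixed
  point of AIO), is reachable: undo a final y_j -> x_j, or an x_j -> x_j y_(j+1) at an
  xy-factor.  Words of weight n are compositions of n into parts 1 and 2, and there are
  F_(n+1) of them.
*)
theory Submission
  imports Defs
begin

section \<open>Nonzero polynomials with natural coefficients\<close>

definition pos_nat_poly :: "'a::comm_semiring_1 poly \<Rightarrow> bool" where
  "pos_nat_poly c \<longleftrightarrow> c \<noteq> 0 \<and> (\<forall>i. coeff c i \<in> \<nat>)"

lemma sum_in_Nats: "(\<And>i. i \<in> A \<Longrightarrow> f i \<in> \<nat>) \<Longrightarrow> sum f A \<in> \<nat>"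
  by (induction A rule: infinite_finite_induct) auto

lemma pos_nat_poly_add:
  fixes a b :: "'a::{comm_semiring_1,semiring_char_0} poly"
  assumes "pos_nat_poly a" "pos_nat_poly b"
  shows "pos_nat_poly (a + b)"
proof -
  from assms obtain i where "coeff a i \<noteq> 0"
    unfolding pos_nat_poly_def by (metis poly_eqI coeff_0)
  moreover have "coeff a i \<in> \<nat>" "coeff b i \<in> \<nat>"
    using assms by (auto simp: pos_nat_poly_def)
  ultimately obtain k m where "coeff a i = of_nat k" "coeff b i = of_nat m" "k \<noteq> 0"
    by (metis Nats_cases of_nat_0)
  then have "coeff (a + b) i \<noteq> 0"
    by (metis coeff_add of_nat_add of_nat_eq_0_iff add_is_0)
  then have "a + b \<noteq> 0"
    by (metis coeff_0)
  then show ?thesis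
    using assms by (auto simp: pos_nat_poly_def)
qed

lemma pos_nat_poly_mult:
  fixes a b :: "'a::{comm_semiring_1,semiring_char_0} poly"
  assumes "pos_nat_poly a" "pos_nat_poly b"
  shows "pos_nat_poly (a * b)"
proof -
  obtain k m where "lead_coeff a = of_nat k" "lead_coeff b = of_nat m" "k \<noteq> 0" "m \<noteq> 0"
    using assms unfolding pos_nat_poly_def by (metis Nats_cases of_nat_0 leading_coeff_0_iff)
  then have "coeff (a * b) (degree a + degree b) \<noteq> 0"
    by (simp add: coeff_mult_degree_sum flip: of_nat_mult)
  moreover have "coeff (a * b) i \<in> \<nat>" for i
    unfolding coeff_mult using assms by (intro sum_in_Nats) (auto simp: pos_nat_poly_def)
  ultimately show ?thesis
    by (auto simp: pos_nat_poly_def)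
qed

lemma pos_nat_poly_1: "pos_nat_poly 1"
  by (simp add: pos_nat_poly_def coeff_1)

lemma pos_nat_poly_X_power: "pos_nat_poly ([:0, 1:] ^ j :: 'a::{comm_semiring_1,semiring_char_0} poly)"
proof -
  have X: "pos_nat_poly ([:0, 1:] :: 'a poly)"
    by (simp add: pos_nat_poly_def coeff_pCons split: nat.splits)
  show ?thesis
  proof (induction j)
    case 0
    show ?case
      by (simp add: pos_nat_poly_1)
  next
    case (Suc j)
    show ?case
      unfolding power_Suc using X Suc.IH by (rule pos_nat_poly_mult)
  qed
qed

section \<open>Supports of combinations with such coefficients\<close>

definition pos_nat_coeffs :: "('b \<Rightarrow>\<^sub>0 'a::comm_semiring_1 poly) \<Rightarrow> bool" where
  "pos_nat_coeffs f \<longleftrightarrow> (\<forall>w\<in>Poly_Mapping.keys f. pos_nat_poly (Poly_Mapping.lookup f w))"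

lemma pos_nat_coeffs_single: "pos_nat_poly c \<Longrightarrow> pos_nat_coeffs (Poly_Mapping.single k c)"
  by (simp add: pos_nat_coeffs_def)

lemma keys_single_pos_nat_poly:
  "pos_nat_poly c \<Longrightarrow> Poly_Mapping.keys (Poly_Mapping.single k c) = {k}"
  by (simp add: pos_nat_poly_def)

lemma pos_nat_coeffs_lookup:
  "pos_nat_coeffs f \<Longrightarrow> Poly_Mapping.lookup f w = 0 \<or> pos_nat_poly (Poly_Mapping.lookup f w)"
  unfolding pos_nat_coeffs_def by (metis in_keys_iff)

lemma
  fixes f g :: "'b \<Rightarrow>\<^sub>0 'a::{comm_semiring_1,semiring_char_0} poly"
  assumes "pos_nat_coeffs f" "pos_nat_coeffs g"
  shows pos_nat_coeffs_add: "pos_nat_coeffs (f + g)"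
    and keys_add_pos_nat_coeffs: "Poly_Mapping.keys (f + g) = Poly_Mapping.keys f \<union> Poly_Mapping.keys g"
proof -
  have pos: "pos_nat_poly (Poly_Mapping.lookup f w + Poly_Mapping.lookup g w)"
    if "w \<in> Poly_Mapping.keys f \<union> Poly_Mapping.keys g" for w
    using that pos_nat_coeffs_lookup[OF assms(1), of w] pos_nat_coeffs_lookup[OF assms(2), of w]
    by (auto simp: in_keys_iff pos_nat_poly_add)
  show keys: "Poly_Mapping.keys (f + g) = Poly_Mapping.keys f \<union> Poly_Mapping.keys g"
    using pos keys_add[of f g] by (force simp: in_keys_iff lookup_add pos_nat_poly_def)
  show "pos_nat_coeffs (f + g)"
    unfolding pos_nat_coeffs_def keys using pos by (simp add: lookup_add)
qed

lemma
  fixes F :: "'c \<Rightarrow> 'b \<Rightarrow>\<^sub>0 'a::{comm_semiring_1,semiring_char_0} poly"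
  assumes "finite J" "\<And>j. j \<in> J \<Longrightarrow> pos_nat_coeffs (F j)"
  shows pos_nat_coeffs_sum: "pos_nat_coeffs (\<Sum>j\<in>J. F j)"
    and keys_sum_pos_nat_coeffs: "Poly_Mapping.keys (\<Sum>j\<in>J. F j) = (\<Union>j\<in>J. Poly_Mapping.keys (F j))"
proof -
  have "pos_nat_coeffs (\<Sum>j\<in>J. F j) \<and> Poly_Mapping.keys (\<Sum>j\<in>J. F j) = (\<Union>j\<in>J. Poly_Mapping.keys (F j))"
    using assms
  proof (induction J rule: finite_induct)
    case empty
    then show ?case
      by (simp add: pos_nat_coeffs_def)
  next
    case (insert j J)
    then show ?case
      by (simp add: pos_nat_coeffs_add keys_add_pos_nat_coeffs)
  qed
  then show "pos_nat_coeffs (\<Sum>j\<in>J. F j)"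
    and "Poly_Mapping.keys (\<Sum>j\<in>J. F j) = (\<Union>j\<in>J. Poly_Mapping.keys (F j))"
    by auto
qed

lemma
  fixes g :: "'b \<Rightarrow>\<^sub>0 'a::{comm_semiring_1,semiring_char_0} poly"
  assumes "pos_nat_poly a" "pos_nat_coeffs g"
  shows pos_nat_coeffs_scale: "pos_nat_coeffs (Poly_Mapping.map (\<lambda>c. a * c) g)"
    and keys_scale_pos_nat_coeffs: "Poly_Mapping.keys (Poly_Mapping.map (\<lambda>c. a * c) g) = Poly_Mapping.keys g"
proof -
  have pos: "pos_nat_poly (a * Poly_Mapping.lookup g w)" if "w \<in> Poly_Mapping.keys g" for w
    using that assms pos_nat_poly_mult unfolding pos_nat_coeffs_def by blast
  show keys: "Poly_Mapping.keys (Poly_Mapping.map (\<lambda>c. a * c) g) = Poly_Mapping.keys g"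
    using pos by (fastforce simp: in_keys_iff map.rep_eq when_def pos_nat_poly_def)
  show "pos_nat_coeffs (Poly_Mapping.map (\<lambda>c. a * c) g)"
    unfolding pos_nat_coeffs_def keys using pos by (simp add: map.rep_eq when_def in_keys_iff)
qed

lemma
  fixes f :: "'b \<Rightarrow>\<^sub>0 'a::{comm_semiring_1,semiring_char_0} poly"
  assumes "pos_nat_coeffs f" "\<And>w. w \<in> Poly_Mapping.keys f \<Longrightarrow> pos_nat_coeffs (g w)"
  shows pos_nat_coeffs_lin_ext: "pos_nat_coeffs (lin_ext g f)"
    and keys_lin_ext_pos_nat_coeffs:
      "Poly_Mapping.keys (lin_ext g f) = (\<Union>w\<in>Poly_Mapping.keys f. Poly_Mapping.keys (g w))"
proof -
  have "pos_nat_poly (Poly_Mapping.lookup f w)" if "w \<in> Poly_Mapping.keys f" for w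
    using that assms(1) by (simp add: pos_nat_coeffs_def)
  note scale = pos_nat_coeffs_scale[OF this assms(2)] keys_scale_pos_nat_coeffs[OF this assms(2)]
  show "pos_nat_coeffs (lin_ext g f)"
    unfolding lin_ext_def by (simp add: pos_nat_coeffs_sum scale)
  show "Poly_Mapping.keys (lin_ext g f) = (\<Union>w\<in>Poly_Mapping.keys f. Poly_Mapping.keys (g w))"
    unfolding lin_ext_def by (simp add: keys_sum_pos_nat_coeffs scale cong: SUP_cong)
qed

lemma lin_ext_single: "lin_ext g (Poly_Mapping.single k c) = Poly_Mapping.map (\<lambda>d. c * d) (g k)"
  by (cases "c = 0") (simp_all add: lin_ext_def map_eq_zero_iff)

section \<open>The support of the iterated derivative\<close>

fun rule_word :: "letter \<Rightarrow> letter list" where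
  "rule_word (MX, j) = [(MX, j), (MY, Suc j)]"
| "rule_word (MY, j) = [(MX, j)]"

lemma R_AndI_eq: "R_AndI l = Poly_Mapping.single (rule_word l) ([:0, 1:] ^ snd l)"
  by (cases l; cases "fst l") auto

definition rewrite_at :: "letter list \<Rightarrow> nat \<Rightarrow> letter list" where
  "rewrite_at w j = AIO (take j w @ rule_word (w ! j) @ map up_letter (drop (Suc j) w))"

lemma rewrite_at_append: "rewrite_at (P @ l # Q) (length P) = AIO (P @ rule_word l @ map up_letter Q)"
  by (simp add: rewrite_at_def)

lemma D_word_eq: "D_word w = (\<Sum>j<length w. Poly_Mapping.single (rewrite_at w j) ([:0, 1:] ^ snd (w ! j)))"
  by (simp add: D_word_def R_AndI_eq lin_ext_single rewrite_at_def)

lemma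
  fixes w :: "letter list"
  shows pos_nat_coeffs_D_word: "pos_nat_coeffs (D_word w :: 'a::{comm_ring_1,ring_char_0} elt)"
    and keys_D_word: "Poly_Mapping.keys (D_word w :: 'a elt) = rewrite_at w ` {..<length w}"
proof -
  have "pos_nat_poly ([:0, 1:] ^ j :: 'a poly)" and "[:0, 1:] ^ j \<noteq> (0 :: 'a poly)" for j
    using pos_nat_poly_X_power unfolding pos_nat_poly_def by blast+
  then show "pos_nat_coeffs (D_word w :: 'a elt)"
    and "Poly_Mapping.keys (D_word w :: 'a elt) = rewrite_at w ` {..<length w}"
    unfolding D_word_eq
    by (simp_all add: pos_nat_coeffs_sum keys_sum_pos_nat_coeffs pos_nat_coeffs_single UNION_singleton_eq_range)
qed

lemma
  fixes f :: "'a::{comm_ring_1,ring_char_0} elt"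
  assumes "pos_nat_coeffs f"
  shows pos_nat_coeffs_D_AndI: "pos_nat_coeffs (D_AndI f)"
    and keys_D_AndI: "Poly_Mapping.keys (D_AndI f) = (\<Union>w\<in>Poly_Mapping.keys f. rewrite_at w ` {..<length w})"
  unfolding D_AndI_def using assms
  by (simp_all add: pos_nat_coeffs_lin_ext keys_lin_ext_pos_nat_coeffs pos_nat_coeffs_D_word keys_D_word)

lemma keys_phi_nc: "pos_nat_coeffs (f :: 'a::{comm_ring_1,ring_char_0} elt) \<Longrightarrow>
    Poly_Mapping.keys (phi_nc f) = map fst ` Poly_Mapping.keys f"
  unfolding phi_nc_def
  by (auto simp: keys_lin_ext_pos_nat_coeffs pos_nat_coeffs_single keys_single_pos_nat_poly pos_nat_poly_1)

fun reachable_words :: "nat \<Rightarrow> letter list set" where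
  "reachable_words 0 = {[(MX, 0)]}"
| "reachable_words (Suc n) = (\<Union>w\<in>reachable_words n. rewrite_at w ` {..<length w})"

lemma
  fixes n :: nat
  defines "F \<equiv> (D_AndI ^^ n) (Poly_Mapping.single [(MX, 0)] (1 :: 'a::{comm_ring_1,ring_char_0} poly))"
  shows pos_nat_coeffs_D_AndI_power: "pos_nat_coeffs F"
    and keys_D_AndI_power: "Poly_Mapping.keys F = reachable_words n"
  unfolding F_def
  by (induction n)
    (simp_all add: pos_nat_coeffs_single pos_nat_poly_1 pos_nat_coeffs_D_AndI keys_D_AndI)

section \<open>Which words are reachable\<close>

fun letter_weight :: "master \<Rightarrow> nat" where
  "letter_weight MX = 2"
| "letter_weight MY = 1"

definition word_weight :: "master list \<Rightarrow> nat" where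
  "word_weight v = sum_list (map letter_weight v)"

lemma word_weight_simps [simp]:
  "word_weight [] = 0"
  "word_weight (a # v) = letter_weight a + word_weight v"
  "word_weight (u @ v) = word_weight u + word_weight v"
  by (simp_all add: word_weight_def)

lemma letter_weight_pos [simp]: "letter_weight a > 0"
  by (cases a) simp_all

lemma word_weight_eq_0_iff [simp]: "word_weight v = 0 \<longleftrightarrow> v = []"
  by (cases v) simp_all

lemma word_weight_AIO: "word_weight (map fst (AIO L)) = word_weight (map fst L)"
  unfolding word_weight_def AIO_def by (metis mset_map mset_sort sum_mset_sum_list)

lemma word_weight_rule_word: "word_weight (map fst (rule_word l)) = letter_weight (fst l) + 1"
  by (cases l; cases "fst l") auto

lemma fst_comp_up_letter [simp]: "fst \<circ> up_letter = fst"
  by (auto simp: fun_eq_iff)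

lemma aio_key_eq_0_iff: "aio_key l = 0 \<longleftrightarrow> l = (MX, 0)"
  by (cases l; cases "fst l") auto

lemma aio_key_bounds: "2 * snd l \<le> aio_key l \<and> aio_key l \<le> 2 * snd l + 1"
  by (cases l; cases "fst l") auto

lemma AIO_starts_with_x0:
  assumes "(MX, 0) \<in> set L"
  obtains r where "AIO L = (MX, 0) # r"
proof -
  have sorted: "sorted (map aio_key (AIO L))" and set: "set (AIO L) = set L"
    by (simp_all add: AIO_def)
  then obtain a r where ar: "AIO L = a # r"
    using assms by (cases "AIO L") auto
  have "(MX, 0) \<in> set (a # r)"
    using assms set ar by simp
  then have "aio_key a \<le> aio_key (MX, 0)"
    using sorted ar by auto
  then have "a = (MX, 0)"
    by (simp add: aio_key_eq_0_iff)
  with ar that show ?thesis by blast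
qed

lemma reachable_word_shape:
  "w \<in> reachable_words n \<Longrightarrow> \<exists>r. w = (MX, 0) # r \<and> word_weight (map fst r) = n"
proof (induction n arbitrary: w)
  case (Suc n)
  then obtain w' j where w': "w' \<in> reachable_words n" "j < length w'" and w: "w = rewrite_at w' j"
    by auto
  obtain r where r: "w' = (MX, 0) # r" and weight: "word_weight (map fst r) = n"
    using Suc.IH w'(1) by blast
  define P where "P = take j w'"
  define l where "l = w' ! j"
  define Q where "Q = drop (Suc j) w'"
  have PlQ: "w' = P @ l # Q" and j: "j = length P"
    using w'(2) by (simp_all add: P_def l_def Q_def id_take_nth_drop)
  have w_eq: "w = AIO (P @ rule_word l @ map up_letter Q)"
    using w rewrite_at_append[of P l Q] PlQ j by simp
  have "(MX, 0) \<in> set (P @ rule_word l @ map up_letter Q)"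
    using r PlQ by (cases P) auto
  then obtain r' where r': "w = (MX, 0) # r'"
    using w_eq AIO_starts_with_x0 by metis
  have "word_weight (map fst w) = word_weight (map fst w') + 1"
    using PlQ by (simp add: w_eq word_weight_AIO word_weight_rule_word)
  then have "word_weight (map fst r') = Suc n"
    using r r' weight by simp
  with r' show ?case
    by blast
qed simp

fun attach_indices :: "nat \<Rightarrow> master list \<Rightarrow> letter list" where
  "attach_indices i [] = []"
| "attach_indices i (a # p) = (a, i) # attach_indices (Suc i) p"

lemma length_attach_indices [simp]: "length (attach_indices i p) = length p"
  by (induction p arbitrary: i) auto

lemma attach_indices_append [simp]:
  "attach_indices i (s @ t) = attach_indices i s @ attach_indices (i + length s) t"
  by (induction s arbitrary: i) auto

lemma map_fst_attach_indices [simp]: "map fst (attach_indices i p) = p"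
  by (induction p arbitrary: i) auto

lemma map_up_letter_attach_indices [simp]:
  "map up_letter (attach_indices i p) = attach_indices (Suc i) p"
  by (induction p arbitrary: i) auto

lemma attach_indices_ge: "l \<in> set (attach_indices i p) \<Longrightarrow> i \<le> snd l"
  by (induction p arbitrary: i) fastforce+

lemma AIO_attach_indices: "AIO (attach_indices i p) = attach_indices i p"
proof -
  have "sorted (map aio_key (attach_indices i p))"
  proof (induction p arbitrary: i)
    case (Cons a p)
    have "aio_key (a, i) \<le> aio_key l" if "l \<in> set (attach_indices (Suc i) p)" for l
      using attach_indices_ge[OF that] aio_key_bounds[of "(a, i)"] aio_key_bounds[of l] by simp
    with Cons show ?case by auto
  qed simp
  then show ?thesis
    unfolding AIO_def by (rule sort_key_id_if_sorted)
qed

lemma reachable_by_rewrite_at: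
  assumes "attach_indices 0 (P @ a # Q) \<in> reachable_words n"
    and "attach_indices 0 P @ rule_word (a, length P) @ attach_indices (Suc (Suc (length P))) Q
      = attach_indices 0 p"
  shows "attach_indices 0 p \<in> reachable_words (Suc n)"
proof -
  let ?w = "attach_indices 0 (P @ a # Q)"
  have "rewrite_at ?w (length P)
      = AIO (attach_indices 0 P @ rule_word (a, length P) @ attach_indices (Suc (Suc (length P))) Q)"
    using rewrite_at_append[of "attach_indices 0 P" "(a, length P)" "attach_indices (Suc (length P)) Q"]
    by simp
  also have "\<dots> = attach_indices 0 p"
    using assms(2) by (simp only: AIO_attach_indices)
  finally have "attach_indices 0 p \<in> rewrite_at ?w ` {..<length ?w}"
    by (intro rev_image_eqI[of "length P"]) simp_all
  then show ?thesis
    unfolding reachable_words.simps by (rule UN_I[OF assms(1)])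
qed

lemma xy_factor_exists:
  "p \<noteq> [] \<Longrightarrow> hd p = MX \<Longrightarrow> last p = MY \<Longrightarrow> \<exists>A B. p = A @ MX # MY # B"
proof (induction p)
  case (Cons a q)
  then obtain b q' where a: "a = MX" and q: "q = b # q'"
    by (cases q) auto
  show ?case
  proof (cases b)
    case MX
    then obtain A B where "q = A @ MX # MY # B"
      using Cons q by auto
    then show ?thesis
      using a by (metis append_Cons)
  qed (use a q in \<open>metis append_Nil\<close>)
qed simp

lemma attach_indices_reachable:
  "p \<noteq> [] \<Longrightarrow> hd p = MX \<Longrightarrow> word_weight p = n + 2 \<Longrightarrow> attach_indices 0 p \<in> reachable_words n"
proof (induction n arbitrary: p)
  case 0
  then show ?case
    by (cases p) auto
next
  case (Suc n)
  show ?case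
  proof (cases "last p")
    case MX
    define s where "s = butlast p"
    have s: "p = s @ [MX]"
      using Suc.prems(1) MX by (metis append_butlast_last_id s_def)
    have "s \<noteq> []"
      using Suc.prems(3) s by auto
    then have "attach_indices 0 (s @ [MY]) \<in> reachable_words n"
      using Suc.prems s by (intro Suc.IH) auto
    then show ?thesis
      using s by (intro reachable_by_rewrite_at[where Q = "[]"]) auto
  next
    case MY
    then obtain A B where p: "p = A @ MX # MY # B"
      using xy_factor_exists Suc.prems by blast
    then have "attach_indices 0 (A @ MX # B) \<in> reachable_words n"
      using Suc.prems by (intro Suc.IH) (auto simp: hd_append)
    then show ?thesis
      using p by (intro reachable_by_rewrite_at) auto
  qed
qed

definition words_of_weight :: "nat \<Rightarrow> master list set" where
  "words_of_weight m = {v. word_weight v = m}"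

lemma image_reachable_words: "map fst ` reachable_words n = Cons MX ` words_of_weight n"
proof
  show "map fst ` reachable_words n \<subseteq> Cons MX ` words_of_weight n"
    using reachable_word_shape by (fastforce simp: words_of_weight_def)
  show "Cons MX ` words_of_weight n \<subseteq> map fst ` reachable_words n"
  proof
    fix p assume "p \<in> Cons MX ` words_of_weight n"
    then have "attach_indices 0 p \<in> reachable_words n"
      by (auto simp: words_of_weight_def intro: attach_indices_reachable)
    then show "p \<in> map fst ` reachable_words n"
      by (metis map_fst_attach_indices image_eqI)
  qed
qed

section \<open>Counting words by weight\<close>

lemma words_of_weight_Suc_Suc:
  "words_of_weight (Suc (Suc m)) = Cons MX ` words_of_weight m \<union> Cons MY ` words_of_weight (Suc m)"
proof
  show "words_of_weight (Suc (Suc m)) \<subseteq> Cons MX ` words_of_weight m \<union> Cons MY ` words_of_weight (Suc m)"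
  proof
    fix v assume "v \<in> words_of_weight (Suc (Suc m))"
    then show "v \<in> Cons MX ` words_of_weight m \<union> Cons MY ` words_of_weight (Suc m)"
      by (cases v; cases "hd v") (auto simp: words_of_weight_def)
  qed
qed (auto simp: words_of_weight_def)

lemma finite_words_of_weight: "finite (words_of_weight m)"
  and card_words_of_weight: "card (words_of_weight m) = fib (Suc m)"
proof (induction m rule: fib.induct)
  case 1
  then have "words_of_weight 0 = {[]}"
    by (auto simp: words_of_weight_def)
  then show "finite (words_of_weight 0)" "card (words_of_weight 0) = fib (Suc 0)"
    by simp_all
next
  case 2
  have "word_weight v = Suc 0 \<longleftrightarrow> v = [MY]" for v
    by (cases v; cases "hd v") auto
  then have "words_of_weight (Suc 0) = {[MY]}"
    by (auto simp: words_of_weight_def)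
  then show "finite (words_of_weight (Suc 0))" "card (words_of_weight (Suc 0)) = fib (Suc (Suc 0))"
    by simp_all
next
  case (3 m)
  then show "finite (words_of_weight (Suc (Suc m)))"
    by (simp add: words_of_weight_Suc_Suc)
  have "card (words_of_weight (Suc (Suc m)))
      = card (Cons MX ` words_of_weight m) + card (Cons MY ` words_of_weight (Suc m))"
    unfolding words_of_weight_Suc_Suc using 3 by (intro card_Un_disjoint) auto
  also have "\<dots> = fib (Suc (Suc (Suc m)))"
    using 3 by (simp add: card_image)
  finally show "card (words_of_weight (Suc (Suc m))) = fib (Suc (Suc (Suc m)))" .
qed

theorem proposition6p10:
  fixes n :: nat
  assumes "n \<ge> 1"
  shows "card (Poly_Mapping.keys (phi_nc ((D_AndI ^^ n) (Poly_Mapping.single [(MX, 0)] (1 :: ('a::{comm_ring_1, ring_char_0}) poly)))))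
         = fib (n + 1)"
proof -
  let ?F = "(D_AndI ^^ n) (Poly_Mapping.single [(MX, 0)] (1 :: 'a poly))"
  have "Poly_Mapping.keys (phi_nc ?F) = map fst ` Poly_Mapping.keys ?F"
    by (rule keys_phi_nc[OF pos_nat_coeffs_D_AndI_power])
  also have "\<dots> = Cons MX ` words_of_weight n"
    by (simp add: keys_D_AndI_power image_reachable_words)
  finally show ?thesis
    by (simp add: card_image card_words_of_weight)
qed

end
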